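(* Let $L,N$ be finite simplicial complexes, $\varphi: L\to N$ a surjective simplicial finite-fibration and $n\ge2$. Then $\mathrm{TC}_n(\varphi)\le\min\{\mathrm{TC}_n(L),\mathrm{TC}_n(N)\}$.
   Context: Simplicial complexes are abstract and edge-path connected; $K^n$ is the $n$-fold categorical product (vertex set $\mathrm{VX}(K)^n$; a set of vertices is a simplex iff each coordinate projection is a simplex). Simplicial maps $f,g: K\to K'$ are contiguous if $f(\sigma)\cup g(\sigma)$ is a simplex for every simplex $\sigma$; $f\sim g$ if joined by a finite chain of contiguous simplicial maps. $\mathrm{SD}(\varphi_1,\dots,\varphi_m)$ for simplicial maps $K\to K'$ is the least $k\ge0$ such that $K$ is a union of subcomplexes $K_0,\dots,K_k$ with $\varphi_i|_{K_j}\sim\varphi_l|_{K_j}$ for all $i,l,j$. With $p_i: K^n\to K$ the projections, $\mathrm{TC}_n(K)=\mathrm{SD}(p_1,\dots,p_n)$, and for surjective $\varphi: L\to N$, $\mathrm{TC}_n(\varphi)=\mathrm{SD}(\varphi\circ p_1,\dots,\varphi\circ p_n)$ with $p_i: L^n\to L$. $I_m$ is the complex with vertices $0,\dots,m$ and edges $\{i,i+1\}$; $\varphi: L\to N$ is a simplicial finite-fibration if for every finite complex $M$, $m\ge1$, inclusion $i: M\times\{0\}\to M\times I_m$ and simplicial $g: M\times\{0\}\to L$, $G: M\times I_m\to N$ with $\varphi\circ g=G\circ i$, there is simplicial $\widetilde G: M\times I_m\to L$ with $\widetilde G\circ i=g$, $\varphi\circ\widetilde G=G$. *)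

theory Defs
  imports Main
begin

definition simplicial_complex :: "'a set set \<Rightarrow> bool" where
  "simplicial_complex K \<longleftrightarrow>
     (\<forall>\<sigma>\<in>K. finite \<sigma> \<and> \<sigma> \<noteq> {}) \<and>
     (\<forall>\<sigma>\<in>K. \<forall>\<tau>. \<tau> \<subseteq> \<sigma> \<and> \<tau> \<noteq> {} \<longrightarrow> \<tau> \<in> K)"

definition vertices :: "'a set set \<Rightarrow> 'a set" where
  "vertices K = \<Union>K"

definition edge_path_connected :: "'a set set \<Rightarrow> bool" where
  "edge_path_connected K \<longleftrightarrow>
     (\<forall>u\<in>vertices K. \<forall>v\<in>vertices K. (\<lambda>x y. {x, y} \<in> K)\<^sup>*\<^sup>* u v)"

definition complex :: "'a set set \<Rightarrow> bool" where
  "complex K \<longleftrightarrow> simplicial_complex K \<and> edge_path_connected K"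

definition simplicial_map :: "'a set set \<Rightarrow> 'b set set \<Rightarrow> ('a \<Rightarrow> 'b) \<Rightarrow> bool" where
  "simplicial_map K K' f \<longleftrightarrow> (\<forall>\<sigma>\<in>K. f ` \<sigma> \<in> K')"

definition contiguous :: "'a set set \<Rightarrow> 'b set set \<Rightarrow> ('a \<Rightarrow> 'b) \<Rightarrow> ('a \<Rightarrow> 'b) \<Rightarrow> bool" where
  "contiguous K K' f g \<longleftrightarrow> simplicial_map K K' f \<and> simplicial_map K K' g \<and>
     (\<forall>\<sigma>\<in>K. f ` \<sigma> \<union> g ` \<sigma> \<in> K')"

definition contiguity_class :: "'a set set \<Rightarrow> 'b set set \<Rightarrow> ('a \<Rightarrow> 'b) \<Rightarrow> ('a \<Rightarrow> 'b) \<Rightarrow> bool" where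
  "contiguity_class K K' f g \<longleftrightarrow> simplicial_map K K' f \<and> (contiguous K K')\<^sup>*\<^sup>* f g"

definition subcomplex :: "'a set set \<Rightarrow> 'a set set \<Rightarrow> bool" where
  "subcomplex A K \<longleftrightarrow> A \<subseteq> K \<and> simplicial_complex A"

definition SD :: "'a set set \<Rightarrow> 'b set set \<Rightarrow> ('a \<Rightarrow> 'b) list \<Rightarrow> nat" where
  "SD K K' fs = (LEAST k. \<exists>C :: nat \<Rightarrow> 'a set set.
      (\<forall>j\<le>k. subcomplex (C j) K) \<and> (\<Union>j\<le>k. C j) = K \<and>
      (\<forall>j\<le>k. \<forall>i<length fs. \<forall>l<length fs. contiguity_class (C j) K' (fs ! i) (fs ! l)))"

text \<open>Categorical n-fold product K^n; vertices are lists of length n.\<close>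
definition power_complex :: "'a set set \<Rightarrow> nat \<Rightarrow> 'a list set set" where
  "power_complex K n = {\<sigma>. \<sigma> \<noteq> {} \<and> finite \<sigma> \<and> (\<forall>x\<in>\<sigma>. length x = n) \<and>
      (\<forall>i<n. (\<lambda>x. x ! i) ` \<sigma> \<in> K)}"

definition prod_complex :: "'a set set \<Rightarrow> 'b set set \<Rightarrow> ('a \<times> 'b) set set" where
  "prod_complex M P = {\<sigma>. \<sigma> \<noteq> {} \<and> finite \<sigma> \<and> fst ` \<sigma> \<in> M \<and> snd ` \<sigma> \<in> P}"

definition TC :: "nat \<Rightarrow> 'a set set \<Rightarrow> nat" where
  "TC n K = SD (power_complex K n) K (map (\<lambda>i x. x ! i) [0..<n])"

definition TC_map :: "nat \<Rightarrow> 'a set set \<Rightarrow> 'b set set \<Rightarrow> ('a \<Rightarrow> 'b) \<Rightarrow> nat" where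
  "TC_map n L N \<phi> = SD (power_complex L n) N (map (\<lambda>i x. \<phi> (x ! i)) [0..<n])"

definition interval_complex :: "nat \<Rightarrow> nat set set" where
  "interval_complex m = {{i} | i. i \<le> m} \<union> {{i, Suc i} | i. i < m}"

text \<open>Finite test complexes M are taken with vertices in nat
  (every finite complex is isomorphic to one of these). M \<times> {0} is the product with the
  one-vertex complex {{0}}; the inclusion into M \<times> I_m is the identity on vertices.\<close>
definition finite_fibration :: "'a set set \<Rightarrow> 'b set set \<Rightarrow> ('a \<Rightarrow> 'b) \<Rightarrow> bool" where
  "finite_fibration L N \<phi> \<longleftrightarrow> simplicial_map L N \<phi> \<and>
     (\<forall>(M :: nat set set) m g G.
        simplicial_complex M \<and> finite M \<and> m \<ge> 1 \<and>
        simplicial_map (prod_complex M {{0}}) L g \<and>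
        simplicial_map (prod_complex M (interval_complex m)) N G \<and>
        (\<forall>v\<in>vertices (prod_complex M {{0}}). \<phi> (g v) = G v)
        \<longrightarrow> (\<exists>Gt. simplicial_map (prod_complex M (interval_complex m)) L Gt \<and>
               (\<forall>v\<in>vertices (prod_complex M {{0}}). Gt v = g v) \<and>
               (\<forall>v\<in>vertices (prod_complex M (interval_complex m)). \<phi> (Gt v) = G v)))"

end

theory Submission
  imports Defs
begin

(* Both bounds come from transporting an optimal cover. A cover of L^n on whose pieces the
   projections are pairwise in one contiguity class stays such a cover after composing the
   projections with \<phi>. A cover of N^n for the projections of N pulls back along
   map \<phi> : L^n \<rightarrow> N^n to a cover of L^n for the maps \<phi> \<circ> p_i, since p_i \<circ> map \<phi> = \<phi> \<circ> p_i.
   Neither argument needs the fibration property, surjectivity or n \<ge> 2. The only subtle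
   point is that SD is a LEAST, so the optimal covers must exist: a finite complex is covered
   by the face complexes of its simplices, and on a single simplex any two simplicial maps
   into an edge-path connected complex are contiguous to constant maps, which are joined
   along an edge path. *)

lemma simplicial_complex_face:
  "simplicial_complex K \<Longrightarrow> \<sigma> \<in> K \<Longrightarrow> \<tau> \<subseteq> \<sigma> \<Longrightarrow> \<tau> \<noteq> {} \<Longrightarrow> \<tau> \<in> K"
  unfolding simplicial_complex_def by blast

definition SD_cover ::
    "'a set set \<Rightarrow> 'b set set \<Rightarrow> ('a \<Rightarrow> 'b) list \<Rightarrow> nat \<Rightarrow> (nat \<Rightarrow> 'a set set) \<Rightarrow> bool" where
  "SD_cover K K' fs k C \<longleftrightarrow> (\<forall>j\<le>k. subcomplex (C j) K) \<and> (\<Union>j\<le>k. C j) = K \<and>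
      (\<forall>j\<le>k. \<forall>i<length fs. \<forall>l<length fs. contiguity_class (C j) K' (fs ! i) (fs ! l))"

lemma SD_eq_Least: "SD K K' fs = (LEAST k. \<exists>C. SD_cover K K' fs k C)"
  unfolding SD_def SD_cover_def by simp

lemma SD_le_cover: "SD_cover K K' fs k C \<Longrightarrow> SD K K' fs \<le> k"
  unfolding SD_eq_Least by (rule Least_le) blast

lemma SD_cover_SD:
  assumes "\<exists>k C. SD_cover K K' fs k C"
  shows "\<exists>C. SD_cover K K' fs (SD K K' fs) C"
  unfolding SD_eq_Least by (rule LeastI_ex[OF assms])

lemma rtranclp_map:
  assumes "\<And>x y. r x y \<Longrightarrow> s (f x) (f y)" and "r\<^sup>*\<^sup>* x y"
  shows "s\<^sup>*\<^sup>* (f x) (f y)"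
  using assms(2) by induction (auto intro: rtranclp.rtrancl_into_rtrancl assms(1))

lemma contiguous_sym: "contiguous K K' f g \<Longrightarrow> contiguous K K' g f"
  unfolding contiguous_def by (simp add: Un_commute)

lemma simplicial_map_comp:
  "simplicial_map K K' f \<Longrightarrow> simplicial_map K' K'' g \<Longrightarrow> simplicial_map K K'' (g \<circ> f)"
  unfolding simplicial_map_def image_comp[symmetric] by blast

lemma contiguous_comp_left:
  "contiguous K K' f g \<Longrightarrow> simplicial_map K' K'' \<phi> \<Longrightarrow> contiguous K K'' (\<phi> \<circ> f) (\<phi> \<circ> g)"
  unfolding contiguous_def simplicial_map_def image_comp[symmetric] image_Un[symmetric] by blast

lemma contiguous_comp_right:
  "contiguous K K' f g \<Longrightarrow> simplicial_map K0 K h \<Longrightarrow> contiguous K0 K' (f \<circ> h) (g \<circ> h)"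
  unfolding contiguous_def simplicial_map_def image_comp[symmetric] by blast

lemma contiguous_if_eq_on_vertices:
  assumes "simplicial_map K K' f" and "\<forall>v\<in>vertices K. g v = f v"
  shows "contiguous K K' f g"
proof -
  have "g ` \<sigma> = f ` \<sigma>" if "\<sigma> \<in> K" for \<sigma>
    using assms(2) that unfolding vertices_def by (auto intro!: image_cong)
  then show ?thesis using assms(1) unfolding contiguous_def simplicial_map_def by auto
qed

lemma contiguity_class_simplicial_map_right:
  assumes "contiguity_class K K' f g"
  shows "simplicial_map K K' g"
proof -
  have "(contiguous K K')\<^sup>*\<^sup>* f g" "simplicial_map K K' f"
    using assms unfolding contiguity_class_def by simp_all
  then show ?thesis by induction (simp_all add: contiguous_def)
qed

lemma contiguity_class_comp_left:
  assumes "contiguity_class K K' f g" and "simplicial_map K' K'' \<phi>"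
  shows "contiguity_class K K'' (\<phi> \<circ> f) (\<phi> \<circ> g)"
proof -
  have f: "simplicial_map K K' f" and fg: "(contiguous K K')\<^sup>*\<^sup>* f g"
    using assms(1) unfolding contiguity_class_def by simp_all
  have "(contiguous K K'')\<^sup>*\<^sup>* (\<phi> \<circ> f) (\<phi> \<circ> g)"
    by (rule rtranclp_map[where f="(\<circ>) \<phi>", OF _ fg]) (rule contiguous_comp_left[OF _ assms(2)])
  then show ?thesis
    using simplicial_map_comp[OF f assms(2)] unfolding contiguity_class_def by simp
qed

lemma contiguity_class_comp_right:
  assumes "contiguity_class K K' f g" and "simplicial_map K0 K h"
  shows "contiguity_class K0 K' (f \<circ> h) (g \<circ> h)"
proof -
  have f: "simplicial_map K K' f" and fg: "(contiguous K K')\<^sup>*\<^sup>* f g"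
    using assms(1) unfolding contiguity_class_def by simp_all
  have "(contiguous K0 K')\<^sup>*\<^sup>* (f \<circ> h) (g \<circ> h)"
    by (rule rtranclp_map[where f="\<lambda>f. f \<circ> h", OF _ fg]) (rule contiguous_comp_right[OF _ assms(2)])
  then show ?thesis
    using simplicial_map_comp[OF assms(2) f] unfolding contiguity_class_def by simp
qed

lemma contiguity_class_cong_vertices:
  assumes "contiguity_class K K' f g"
    and "\<forall>v\<in>vertices K. f' v = f v" and "\<forall>v\<in>vertices K. g' v = g v"
  shows "contiguity_class K K' f' g'"
proof -
  have f: "simplicial_map K K' f" and fg: "(contiguous K K')\<^sup>*\<^sup>* f g"
    using assms(1) unfolding contiguity_class_def by simp_all
  have "contiguous K K' f' f"
    using contiguous_sym[OF contiguous_if_eq_on_vertices[OF f assms(2)]] .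
  moreover have "contiguous K K' g g'"
    using contiguous_if_eq_on_vertices[OF contiguity_class_simplicial_map_right[OF assms(1)] assms(3)] .
  ultimately have "(contiguous K K')\<^sup>*\<^sup>* f' g'"
    using fg by (meson converse_rtranclp_into_rtranclp rtranclp.rtrancl_into_rtrancl)
  moreover have "simplicial_map K K' f'"
    using \<open>contiguous K K' f' f\<close> unfolding contiguous_def by simp
  ultimately show ?thesis unfolding contiguity_class_def by simp
qed

lemma contiguity_class_empty: "contiguity_class {} K' f g"
  unfolding contiguity_class_def contiguous_def simplicial_map_def by auto

definition faces :: "'a set \<Rightarrow> 'a set set" where
  "faces \<sigma> = {\<tau>. \<tau> \<subseteq> \<sigma> \<and> \<tau> \<noteq> {}}"

lemma subcomplex_faces:
  assumes "simplicial_complex K" and "\<sigma> \<in> K"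
  shows "subcomplex (faces \<sigma>) K"
proof -
  have "finite \<sigma>" using assms unfolding simplicial_complex_def by blast
  then show ?thesis using simplicial_complex_face[OF assms]
    unfolding subcomplex_def faces_def simplicial_complex_def by (auto intro: finite_subset)
qed

lemma contiguous_const_edge:
  assumes "simplicial_complex K'" and "{y, z} \<in> K'" and "{} \<notin> K"
  shows "contiguous K K' (\<lambda>_. y) (\<lambda>_. z)"
  unfolding contiguous_def simplicial_map_def
proof (intro conjI ballI)
  fix \<sigma> assume "\<sigma> \<in> K"
  then have "(\<lambda>_. y) ` \<sigma> = {y}" "(\<lambda>_. z) ` \<sigma> = {z}"
    using assms(3) by (auto simp: image_constant_conv)
  moreover have "{y} \<in> K'" "{z} \<in> K'" "{y} \<union> {z} \<in> K'"
    using simplicial_complex_face[OF assms(1,2)] assms(2) by (auto simp: insert_commute)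
  ultimately show "(\<lambda>_. y) ` \<sigma> \<in> K'" "(\<lambda>_. z) ` \<sigma> \<in> K'"
    "(\<lambda>_. y) ` \<sigma> \<union> (\<lambda>_. z) ` \<sigma> \<in> K'" by simp_all
qed

lemma contiguous_const_edge_path:
  assumes "simplicial_complex K'" and "(\<lambda>x y. {x, y} \<in> K')\<^sup>*\<^sup>* u w" and "{} \<notin> K"
  shows "(contiguous K K')\<^sup>*\<^sup>* (\<lambda>_. u) (\<lambda>_. w)"
  by (rule rtranclp_map[where f="\<lambda>c _. c", OF _ assms(2)])
    (rule contiguous_const_edge[OF assms(1) _ assms(3)])

lemma contiguous_faces_const:
  assumes "simplicial_complex K'" and "simplicial_map (faces \<sigma>) K' f" and "v \<in> \<sigma>"
  shows "contiguous (faces \<sigma>) K' f (\<lambda>_. f v)"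
proof -
  have "f ` \<sigma> \<in> K'" using assms(2,3) unfolding simplicial_map_def faces_def by blast
  then have face: "A \<in> K'" if "A \<subseteq> f ` \<sigma>" "A \<noteq> {}" for A
    using simplicial_complex_face[OF assms(1)] that by blast
  have "f ` \<tau> \<union> {f v} \<in> K'" "{f v} \<in> K'" if "\<tau> \<in> faces \<sigma>" for \<tau>
    using that assms(3) unfolding faces_def by (auto intro!: face)
  moreover have "(\<lambda>_. f v) ` \<tau> = {f v}" if "\<tau> \<in> faces \<sigma>" for \<tau>
    using that unfolding faces_def by auto
  ultimately show ?thesis using assms(2) unfolding contiguous_def simplicial_map_def by simp
qed

lemma contiguity_class_faces:
  assumes "complex K'" and "v \<in> \<sigma>"
    and f: "simplicial_map (faces \<sigma>) K' f" and g: "simplicial_map (faces \<sigma>) K' g"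
  shows "contiguity_class (faces \<sigma>) K' f g"
proof -
  have K': "simplicial_complex K'" using assms(1) unfolding complex_def by simp
  have "\<sigma> \<in> faces \<sigma>" using assms(2) unfolding faces_def by blast
  then have "f v \<in> vertices K'" "g v \<in> vertices K'"
    using f g assms(2) unfolding simplicial_map_def vertices_def by blast+
  then have "(\<lambda>x y. {x, y} \<in> K')\<^sup>*\<^sup>* (f v) (g v)"
    using assms(1) unfolding complex_def edge_path_connected_def by blast
  then have "(contiguous (faces \<sigma>) K')\<^sup>*\<^sup>* (\<lambda>_. f v) (\<lambda>_. g v)"
    by (rule contiguous_const_edge_path[OF K']) (simp add: faces_def)
  moreover have "contiguous (faces \<sigma>) K' f (\<lambda>_. f v)"
    using contiguous_faces_const[OF K' f assms(2)] .
  moreover have "contiguous (faces \<sigma>) K' (\<lambda>_. g v) g"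
    using contiguous_sym[OF contiguous_faces_const[OF K' g assms(2)]] .
  ultimately have "(contiguous (faces \<sigma>) K')\<^sup>*\<^sup>* f g"
    by (meson converse_rtranclp_into_rtranclp rtranclp.rtrancl_into_rtrancl)
  then show ?thesis using f unfolding contiguity_class_def by simp
qed

lemma SD_cover_exists:
  assumes "simplicial_complex K" and "finite K" and "complex K'"
    and "\<forall>f\<in>set fs. simplicial_map K K' f"
  shows "\<exists>k C. SD_cover K K' fs k C"
proof -
  obtain xs where xs: "set xs = K" using finite_list[OF assms(2)] by blast
  \<comment> \<open>The trailing empty piece \<open>C (length xs)\<close> keeps the cover well-formed when \<open>K = {}\<close>.\<close>
  define C where "C j = (if j < length xs then faces (xs ! j) else {})" for j
  have sub: "subcomplex (C j) K" for j
  proof (cases "j < length xs")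
    case True
    then have "xs ! j \<in> K" using xs by auto
    then show ?thesis using True subcomplex_faces[OF assms(1)] by (simp add: C_def)
  qed (simp add: C_def subcomplex_def simplicial_complex_def)
  have "(\<Union>j\<le>length xs. C j) = K"
  proof
    show "(\<Union>j\<le>length xs. C j) \<subseteq> K" using sub unfolding subcomplex_def by blast
    show "K \<subseteq> (\<Union>j\<le>length xs. C j)"
    proof
      fix \<sigma> assume "\<sigma> \<in> K"
      then obtain j where "j < length xs" "xs ! j = \<sigma>" using xs by (metis in_set_conv_nth)
      moreover have "\<sigma> \<noteq> {}" using \<open>\<sigma> \<in> K\<close> assms(1) unfolding simplicial_complex_def by blast
      ultimately have "\<sigma> \<in> C j" unfolding C_def faces_def by auto
      with \<open>j < length xs\<close> show "\<sigma> \<in> (\<Union>j\<le>length xs. C j)" by auto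
    qed
  qed
  moreover have "contiguity_class (C j) K' (fs ! i) (fs ! l)"
    if "i < length fs" "l < length fs" for i j l
  proof (cases "j < length xs")
    case True
    have "xs ! j \<in> K" using True xs by auto
    then obtain v where "v \<in> xs ! j" using assms(1) unfolding simplicial_complex_def by blast
    moreover have "C j \<subseteq> K" using sub unfolding subcomplex_def by blast
    then have "simplicial_map (C j) K' (fs ! i)" "simplicial_map (C j) K' (fs ! l)"
      using assms(4) that unfolding simplicial_map_def by (meson nth_mem subsetD)+
    ultimately show ?thesis using contiguity_class_faces[OF assms(3)] True by (simp add: C_def)
  qed (simp add: C_def contiguity_class_empty)
  ultimately have "SD_cover K K' fs (length xs) C" unfolding SD_cover_def using sub by blast
  then show ?thesis by blast
qed

lemma SD_comp_left_le:
  assumes "\<exists>k C. SD_cover K K' fs k C" and "simplicial_map K' K'' \<phi>"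
  shows "SD K K'' (map ((\<circ>) \<phi>) fs) \<le> SD K K' fs"
proof -
  obtain C where "SD_cover K K' fs (SD K K' fs) C" using SD_cover_SD[OF assms(1)] ..
  then have "SD_cover K K'' (map ((\<circ>) \<phi>) fs) (SD K K' fs) C"
    unfolding SD_cover_def by (auto intro: contiguity_class_comp_left[OF _ assms(2)])
  then show ?thesis by (rule SD_le_cover)
qed

lemma simplicial_complex_preimage:
  assumes "simplicial_complex K" and "simplicial_complex A"
  shows "simplicial_complex {\<sigma> \<in> K. h ` \<sigma> \<in> A}"
  unfolding simplicial_complex_def
proof (intro conjI ballI allI impI)
  fix \<sigma> assume "\<sigma> \<in> {\<sigma> \<in> K. h ` \<sigma> \<in> A}"
  then show "finite \<sigma>" "\<sigma> \<noteq> {}" using assms(1) unfolding simplicial_complex_def by auto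
next
  fix \<sigma> \<tau> assume \<sigma>: "\<sigma> \<in> {\<sigma> \<in> K. h ` \<sigma> \<in> A}" and \<tau>: "\<tau> \<subseteq> \<sigma> \<and> \<tau> \<noteq> {}"
  have "h ` \<tau> \<subseteq> h ` \<sigma>" "h ` \<tau> \<noteq> {}" using \<tau> by auto
  then have "h ` \<tau> \<in> A" using \<sigma> simplicial_complex_face[OF assms(2)] by blast
  moreover have "\<tau> \<in> K" using \<sigma> \<tau> simplicial_complex_face[OF assms(1)] by blast
  ultimately show "\<tau> \<in> {\<sigma> \<in> K. h ` \<sigma> \<in> A}" by blast
qed

lemma SD_pullback_le:
  assumes "\<exists>k C. SD_cover K0 K' gs k C"
    and "simplicial_complex K" and "simplicial_map K K0 h" and "length fs = length gs"
    and "\<And>i v. i < length fs \<Longrightarrow> v \<in> vertices K \<Longrightarrow> (fs ! i) v = (gs ! i) (h v)"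
  shows "SD K K' fs \<le> SD K0 K' gs"
proof -
  obtain C where C: "SD_cover K0 K' gs (SD K0 K' gs) C" using SD_cover_SD[OF assms(1)] ..
  define C' where "C' j = {\<sigma> \<in> K. h ` \<sigma> \<in> C j}" for j
  have "subcomplex (C' j) K" if "j \<le> SD K0 K' gs" for j
  proof -
    have "simplicial_complex (C j)" using C that unfolding SD_cover_def subcomplex_def by blast
    then have "simplicial_complex (C' j)"
      unfolding C'_def by (rule simplicial_complex_preimage[OF assms(2)])
    then show ?thesis unfolding subcomplex_def C'_def by blast
  qed
  moreover have "(\<Union>j\<le>SD K0 K' gs. C' j) = K"
  proof
    show "(\<Union>j\<le>SD K0 K' gs. C' j) \<subseteq> K" unfolding C'_def by blast
    show "K \<subseteq> (\<Union>j\<le>SD K0 K' gs. C' j)"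
    proof
      fix \<sigma> assume "\<sigma> \<in> K"
      then have "h ` \<sigma> \<in> (\<Union>j\<le>SD K0 K' gs. C j)"
        using C assms(3) unfolding SD_cover_def simplicial_map_def by simp
      then show "\<sigma> \<in> (\<Union>j\<le>SD K0 K' gs. C' j)" using \<open>\<sigma> \<in> K\<close> unfolding C'_def by blast
    qed
  qed
  moreover have "contiguity_class (C' j) K' (fs ! i) (fs ! l)"
    if "j \<le> SD K0 K' gs" "i < length fs" "l < length fs" for i j l
  proof (rule contiguity_class_cong_vertices)
    show "contiguity_class (C' j) K' (gs ! i \<circ> h) (gs ! l \<circ> h)"
      using C that assms(4) unfolding SD_cover_def
      by (intro contiguity_class_comp_right) (auto simp: simplicial_map_def C'_def)
    show "\<forall>v\<in>vertices (C' j). (fs ! i) v = (gs ! i \<circ> h) v"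
         "\<forall>v\<in>vertices (C' j). (fs ! l) v = (gs ! l \<circ> h) v"
      using assms(5) that unfolding vertices_def C'_def by auto
  qed
  ultimately have "SD_cover K K' fs (SD K0 K' gs) C'" unfolding SD_cover_def by blast
  then show ?thesis by (rule SD_le_cover)
qed

lemma simplicial_complex_power_complex:
  assumes "simplicial_complex K"
  shows "simplicial_complex (power_complex K n)"
  unfolding simplicial_complex_def
proof (intro conjI ballI allI impI)
  fix \<sigma> assume "\<sigma> \<in> power_complex K n"
  then show "finite \<sigma>" "\<sigma> \<noteq> {}" unfolding power_complex_def by auto
next
  fix \<sigma> \<tau> assume \<sigma>: "\<sigma> \<in> power_complex K n" and \<tau>: "\<tau> \<subseteq> \<sigma> \<and> \<tau> \<noteq> {}"
  have "(\<lambda>x. x ! i) ` \<tau> \<in> K" if "i < n" for i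
  proof (rule simplicial_complex_face[OF assms])
    show "(\<lambda>x. x ! i) ` \<sigma> \<in> K" using \<sigma> that unfolding power_complex_def by blast
    show "(\<lambda>x. x ! i) ` \<tau> \<subseteq> (\<lambda>x. x ! i) ` \<sigma>" "(\<lambda>x. x ! i) ` \<tau> \<noteq> {}"
      using \<tau> by auto
  qed
  moreover have "finite \<tau>" "\<forall>x\<in>\<tau>. length x = n"
    using \<sigma> \<tau> finite_subset unfolding power_complex_def by auto
  ultimately show "\<tau> \<in> power_complex K n"
    using \<tau> unfolding power_complex_def by blast
qed

lemma finite_power_complex:
  assumes "simplicial_complex K" and "finite K"
  shows "finite (power_complex K n)"
proof -
  have "finite (vertices K)"
    using assms unfolding simplicial_complex_def vertices_def by blast
  then have "finite {xs. set xs \<subseteq> vertices K \<and> length xs = n}"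
    by (rule finite_lists_length_eq)
  moreover have "power_complex K n \<subseteq> Pow {xs. set xs \<subseteq> vertices K \<and> length xs = n}"
  proof
    fix \<sigma> assume \<sigma>: "\<sigma> \<in> power_complex K n"
    have "x ! i \<in> vertices K" if "x \<in> \<sigma>" "i < n" for x i
      using \<sigma> that unfolding power_complex_def vertices_def by blast
    then show "\<sigma> \<in> Pow {xs. set xs \<subseteq> vertices K \<and> length xs = n}"
      using \<sigma> unfolding power_complex_def by (auto simp: in_set_conv_nth)
  qed
  ultimately show ?thesis by (meson finite_Pow_iff finite_subset)
qed

lemma simplicial_map_nth_power_complex:
  "i < n \<Longrightarrow> simplicial_map (power_complex K n) K (\<lambda>x. x ! i)"
  unfolding simplicial_map_def power_complex_def by auto

lemma simplicial_map_map_power_complex: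
  assumes "simplicial_map L N \<phi>"
  shows "simplicial_map (power_complex L n) (power_complex N n) (map \<phi>)"
proof -
  have "(\<lambda>x. x ! i) ` map \<phi> ` \<sigma> = \<phi> ` (\<lambda>x. x ! i) ` \<sigma>"
    if "i < n" "\<forall>x\<in>\<sigma>. length x = n" for i \<sigma>
    using that by (force simp: image_image)
  then show ?thesis using assms unfolding power_complex_def simplicial_map_def by auto
qed

lemma TC_cover_exists:
  assumes "complex K" and "finite K"
  shows "\<exists>k C. SD_cover (power_complex K n) K (map (\<lambda>i x. x ! i) [0..<n]) k C"
  using assms
  by (intro SD_cover_exists)
    (auto simp: complex_def simplicial_complex_power_complex finite_power_complex
      simplicial_map_nth_power_complex)

theorem theorem5p3:
  fixes L :: "'a set set" and N :: "'b set set" and \<phi> :: "'a \<Rightarrow> 'b" and n :: nat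
  assumes "complex L" and "complex N" and "finite L" and "finite N"
    and "simplicial_map L N \<phi>" and "\<phi> ` vertices L = vertices N"
    and "finite_fibration L N \<phi>"
    and "n \<ge> 2"
  shows "TC_map n L N \<phi> \<le> min (TC n L) (TC n N)"
proof -
  have "TC_map n L N \<phi> \<le> TC n L"
    using SD_comp_left_le[OF TC_cover_exists[OF assms(1,3)] assms(5)]
    unfolding TC_map_def TC_def by (simp add: comp_def)
  moreover have "TC_map n L N \<phi> \<le> TC n N"
    unfolding TC_map_def TC_def
  proof (rule SD_pullback_le[OF TC_cover_exists[OF assms(2,4)]])
    show "simplicial_complex (power_complex L n)"
      using assms(1) by (simp add: complex_def simplicial_complex_power_complex)
    show "simplicial_map (power_complex L n) (power_complex N n) (map \<phi>)"
      using simplicial_map_map_power_complex[OF assms(5)] .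
    show "(map (\<lambda>i x. \<phi> (x ! i)) [0..<n] ! i) v = (map (\<lambda>i x. x ! i) [0..<n] ! i) (map \<phi> v)"
      if "i < length (map (\<lambda>i x. \<phi> (x ! i)) [0..<n])" "v \<in> vertices (power_complex L n)" for i v
      using that unfolding vertices_def power_complex_def by auto
  qed simp
  ultimately show ?thesis by simp
qed

end
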